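(* Let $q\ge2$ and let $U$ be a dual-unitary operator on $\mathbb{C}^q\otimes\mathbb{C}^q$. Then $$\|\mathcal{M}_+^U\|_2^2=\|\mathcal{M}_-^U\|_2^2=1+(q^2-1)\bigl(1-e_p(U)\bigr),\qquad \|\mathcal{M}_+^U-\mathcal{P}\|_2^2=(q^2-1)\bigl(1-e_p(U)\bigr),$$ where $\mathcal{P}(a)=\operatorname{tr}(a)I/q$. In particular these norms are unchanged when $U$ is replaced by $(u_1\otimes u_2)U(v_1\otimes v_2)$ for any single-site unitaries $u_i,v_i\in U(q)$.
   Context: Product basis $|i\alpha\rangle=|i\rangle\otimes|\alpha\rangle$ of $\mathbb{C}^q\otimes\mathbb{C}^q$. For an operator $X$ define the realignment $\langle\beta\alpha|X^{R_1}|ji\rangle=\langle i\alpha|X|j\beta\rangle$. A unitary $U$ is dual-unitary if $U^{R_1}$ is unitary. $S$ is the swap, $S|\phi\rangle|\psi\rangle=|\psi\rangle|\phi\rangle$. The operator entanglement is $E(U)=1-q^{-4}\operatorname{tr}[(U^{R_1}U^{R_1\dagger})^2]$ and the entangling power is $e_p(U)=\frac{E(U)+E(US)-E(S)}{E(S)}$ with $E(S)=1-1/q^2$. The maps $\mathcal{M}_+^U(a)=\frac1q\operatorname{tr}_1[U^\dagger(a\otimes I)U]$ and $\mathcal{M}_-^U(a)=\frac1q\operatorname{tr}_2[U^\dagger(I\otimes a)U]$ act on $q\times q$ complex matrices. For a linear map $\mathcal{N}$ on $q\times q$ matrices, $\|\mathcal{N}\|_2^2=\sum_{j,l}\operatorname{tr}[\mathcal{N}(E_{jl})^\dagger\mathcal{N}(E_{jl})]$,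 with $E_{jl}=|j\rangle\langle l|$ the matrix units (Hilbert–Schmidt norm of the map w.r.t. the inner product $\operatorname{tr}(a^\dagger b)$). *)

theory Defs
  imports Complex_Main
begin

text \<open>Operators on C^q (x) C^q are represented by their matrix entries in the product
basis: X (i,a) (j,b) = <i a| X |j b>, indices ranging over {..<q} x {..<q}.
Single-site operators are q x q matrices m i j = <i|m|j>, indices in {..<q}.\<close>

type_synonym op1 = "nat \<Rightarrow> nat \<Rightarrow> complex"
type_synonym op2 = "nat \<times> nat \<Rightarrow> nat \<times> nat \<Rightarrow> complex"

definition idx2 :: "nat \<Rightarrow> (nat \<times> nat) set" where
  "idx2 q = {..<q} \<times> {..<q}"

definition mult2 :: "nat \<Rightarrow> op2 \<Rightarrow> op2 \<Rightarrow> op2" where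
  "mult2 q X Y = (\<lambda>a b. \<Sum>c\<in>idx2 q. X a c * Y c b)"

definition adj2 :: "op2 \<Rightarrow> op2" where
  "adj2 X = (\<lambda>a b. cnj (X b a))"

definition id2 :: op2 where
  "id2 = (\<lambda>a b. if a = b then 1 else 0)"

definition trace2 :: "nat \<Rightarrow> op2 \<Rightarrow> complex" where
  "trace2 q X = (\<Sum>a\<in>idx2 q. X a a)"

definition unitary2 :: "nat \<Rightarrow> op2 \<Rightarrow> bool" where
  "unitary2 q U \<longleftrightarrow>
     (\<forall>a\<in>idx2 q. \<forall>b\<in>idx2 q. mult2 q (adj2 U) U a b = id2 a b) \<and>
     (\<forall>a\<in>idx2 q. \<forall>b\<in>idx2 q. mult2 q U (adj2 U) a b = id2 a b)"

definition unitary1 :: "nat \<Rightarrow> op1 \<Rightarrow> bool" where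
  "unitary1 q u \<longleftrightarrow>
     (\<forall>i<q. \<forall>j<q. (\<Sum>k<q. cnj (u k i) * u k j) = (if i = j then 1 else 0)) \<and>
     (\<forall>i<q. \<forall>j<q. (\<Sum>k<q. u i k * cnj (u j k)) = (if i = j then 1 else 0))"

definition realign :: "op2 \<Rightarrow> op2" where
  "realign X = (\<lambda>(\<beta>, \<alpha>) (j, i). X (i, \<alpha>) (j, \<beta>))"

definition dual_unitary :: "nat \<Rightarrow> op2 \<Rightarrow> bool" where
  "dual_unitary q U \<longleftrightarrow> unitary2 q U \<and> unitary2 q (realign U)"

text \<open>Swap: S|phi>|psi> = |psi>|phi>, i.e. <i a|S|j b> = [i=b][a=j].\<close>
definition swap2 :: op2 where
  "swap2 = (\<lambda>(i, \<alpha>) (j, \<beta>). if i = \<beta> \<and> \<alpha> = j then 1 else 0)"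

definition opent :: "nat \<Rightarrow> op2 \<Rightarrow> real" where
  "opent q U = 1 - Re (trace2 q (let R = mult2 q (realign U) (adj2 (realign U)) in mult2 q R R))
                   / (real q) ^ 4"

definition ent_power :: "nat \<Rightarrow> op2 \<Rightarrow> real" where
  "ent_power q U = (opent q U + opent q (mult2 q U swap2) - opent q swap2) / (1 - 1 / (real q)^2)"

definition tensor :: "op1 \<Rightarrow> op1 \<Rightarrow> op2" where
  "tensor a b = (\<lambda>(i, \<alpha>) (j, \<beta>). a i j * b \<alpha> \<beta>)"

definition id1 :: op1 where
  "id1 = (\<lambda>i j. if i = j then 1 else 0)"

definition ptr1 :: "nat \<Rightarrow> op2 \<Rightarrow> op1" where
  "ptr1 q X = (\<lambda>\<alpha> \<beta>. \<Sum>i<q. X (i, \<alpha>) (i, \<beta>))"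

definition ptr2 :: "nat \<Rightarrow> op2 \<Rightarrow> op1" where
  "ptr2 q X = (\<lambda>i j. \<Sum>\<alpha><q. X (i, \<alpha>) (j, \<alpha>))"

definition Mplus :: "nat \<Rightarrow> op2 \<Rightarrow> op1 \<Rightarrow> op1" where
  "Mplus q U a = (\<lambda>m n. ptr1 q (mult2 q (adj2 U) (mult2 q (tensor a id1) U)) m n / of_nat q)"

definition Mminus :: "nat \<Rightarrow> op2 \<Rightarrow> op1 \<Rightarrow> op1" where
  "Mminus q U a = (\<lambda>m n. ptr2 q (mult2 q (adj2 U) (mult2 q (tensor id1 a) U)) m n / of_nat q)"

definition Pmap :: "nat \<Rightarrow> op1 \<Rightarrow> op1" where
  "Pmap q a = (\<lambda>m n. (\<Sum>k<q. a k k) * id1 m n / of_nat q)"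

definition unit_mat :: "nat \<Rightarrow> nat \<Rightarrow> op1" where
  "unit_mat j l = (\<lambda>m n. if m = j \<and> n = l then 1 else 0)"

definition hs_norm2 :: "nat \<Rightarrow> (op1 \<Rightarrow> op1) \<Rightarrow> complex" where
  "hs_norm2 q N = (\<Sum>j<q. \<Sum>l<q. \<Sum>m<q. \<Sum>n<q.
       cnj (N (unit_mat j l) n m) * N (unit_mat j l) n m)"

end

theory Submission
  imports Defs
begin

text \<open>Expanding the Hilbert-Schmidt norm of \<open>M\<^sub>+\<close> in matrix units gives \<open>K(U)/q\<^sup>2\<close>, where
  \<open>K\<close> is a quartic form in the entries of \<open>U\<close> which also equals \<open>tr[(X X\<^sup>\<dagger>)\<^sup>2]\<close> for
  \<open>X = (U S)\<^sup>R\<^sup>1\<close>; and \<open>M\<^sub>-\<close> of \<open>U\<close> is \<open>M\<^sub>+\<close> of \<open>S U S\<close>, which has the same \<open>K\<close>.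
  For dual-unitary \<open>U\<close> both \<open>E(U)\<close> and \<open>E(S)\<close> equal \<open>1 - 1/q\<^sup>2\<close>, so \<open>e\<^sub>p(U)\<close> is an affine
  function of \<open>K(U)\<close>, which gives the first two identities. Subtracting \<open>\<P>\<close> changes the
  norm only through the diagonal, by \<open>1 - 2\<parallel>U\<parallel>\<^sub>F\<^sup>2/q\<^sup>2 = -1\<close>. Finally \<open>K\<close> and the
  Frobenius norm are invariant under a unitary acting on one leg of \<open>U\<close>; since the other legs
  are reached from the first output leg through \<open>U \<mapsto> S U S\<close> and \<open>U \<mapsto> U\<^sup>\<dagger>\<close>, under which
  both functionals are invariant, it suffices to check that leg, where it is unitarity of \<open>u\<close>
  in the form \<open>\<Sum>\<^sub>i (u f)\<^sub>i (u g)\<^sub>i\<^sup>* = \<Sum>\<^sub>c f\<^sub>c g\<^sub>c\<^sup>*\<close>.\<close>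

lemma sum_idx2: "(\<Sum>x\<in>idx2 q. f x) = (\<Sum>i<q. \<Sum>j<q. f (i, j))"
  by (simp add: idx2_def sum.cartesian_product)

lemma if_zero_simps:
  "(if P then x else 0) * (y::complex) = (if P then x * y else 0)"
  "y * (if P then x else 0) = (if P then y * x else 0)"
  "cnj (if P then x else 0) = (if P then cnj x else 0)"
  "(if P \<and> Q then x else 0) = (if P then if Q then x else 0 else 0)"
  "(\<Sum>z\<in>A. if P then f z else 0) = (if P then (\<Sum>z\<in>A. f z) else 0)"
  by auto

lemma mult2_adj2: "mult2 q (adj2 U) X a b = (\<Sum>c1<q. \<Sum>c2<q. cnj (U (c1, c2) a) * X (c1, c2) b)"
  by (simp add: mult2_def adj2_def sum_idx2)

lemma mult2_tensor_unit_id1: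
  assumes "c2 < q" "l < q"
  shows "mult2 q (tensor (unit_mat j l) id1) U (c1, c2) b = (if c1 = j then U (l, c2) b else 0)"
  using assms unfolding mult2_def sum_idx2 tensor_def unit_mat_def id1_def
  by (simp add: if_zero_simps sum.delta sum.delta' cong: if_cong)

lemma mult2_tensor_id1_unit:
  assumes "c1 < q" "l < q"
  shows "mult2 q (tensor id1 (unit_mat j l)) U (c1, c2) b = (if c2 = j then U (c1, l) b else 0)"
  using assms unfolding mult2_def sum_idx2 tensor_def unit_mat_def id1_def
  by (simp add: if_zero_simps sum.delta sum.delta' cong: if_cong)

lemma Mplus_unit_mat:
  assumes "j < q" "l < q"
  shows "Mplus q U (unit_mat j l) m n
           = (\<Sum>i<q. \<Sum>a<q. cnj (U (j, a) (i, m)) * U (l, a) (i, n)) / of_nat q"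
  using assms unfolding Mplus_def ptr1_def mult2_adj2
  by (simp add: mult2_tensor_unit_id1 if_zero_simps sum.delta cong: if_cong)

lemma Mminus_unit_mat:
  assumes "j < q" "l < q"
  shows "Mminus q U (unit_mat j l) m n
           = (\<Sum>a<q. \<Sum>i<q. cnj (U (i, j) (m, a)) * U (i, l) (n, a)) / of_nat q"
  using assms unfolding Mminus_def ptr2_def mult2_adj2
  by (simp add: mult2_tensor_id1_unit if_zero_simps sum.delta' cong: if_cong)

lemma Pmap_unit_mat:
  "j < q \<Longrightarrow> Pmap q (unit_mat j l) m n = (if j = l \<and> m = n then 1 / of_nat q else 0)"
  by (simp add: Pmap_def id1_def unit_mat_def if_zero_simps sum.delta cong: if_cong)

definition quartic_form :: "nat \<Rightarrow> op2 \<Rightarrow> complex" where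
  "quartic_form q U = (\<Sum>i<q. \<Sum>a<q. \<Sum>b<q. \<Sum>j<q. \<Sum>i'<q. \<Sum>a'<q. \<Sum>b'<q. \<Sum>j'<q.
     U (i, a) (b, j) * cnj (U (i, a') (b', j)) * U (i', a') (b', j') * cnj (U (i', a) (b, j')))"

definition swap_conj :: "op2 \<Rightarrow> op2" where
  "swap_conj U = (\<lambda>(i, a) (j, b). U (a, i) (b, j))"

lemma hs_norm2_cong:
  assumes "\<And>j l m n. j < q \<Longrightarrow> l < q \<Longrightarrow> N (unit_mat j l) m n = N' (unit_mat j l) m n"
  shows "hs_norm2 q N = hs_norm2 q N'"
  using assms unfolding hs_norm2_def by (intro sum.cong refl) auto

lemma hs_norm2_real: "hs_norm2 q N = of_real (Re (hs_norm2 q N))"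
  by (simp add: complex_eq_iff hs_norm2_def Im_sum)

lemma cnj_sum2_mult_sum2:
  "cnj (\<Sum>i<q. \<Sum>a<q. f i a) * (\<Sum>i<q. \<Sum>a<q. g i a)
     = (\<Sum>i<q. \<Sum>a<q. \<Sum>i'<q. \<Sum>a'<q. cnj (f i a) * g i' a')"
  by (simp only: cnj_sum sum_distrib_right) (simp only: sum_distrib_left)

lemma hs_norm2_Mplus: "hs_norm2 q (Mplus q U) = quartic_form q U / (of_nat q)^2"
proof -
  have "hs_norm2 q (Mplus q U) = (\<Sum>j<q. \<Sum>l<q. \<Sum>m<q. \<Sum>n<q.
      cnj (\<Sum>i<q. \<Sum>a<q. cnj (U (j, a) (i, n)) * U (l, a) (i, m)) *
      (\<Sum>i<q. \<Sum>a<q. cnj (U (j, a) (i, n)) * U (l, a) (i, m))) / (of_nat q)^2"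
    unfolding hs_norm2_def sum_divide_distrib
    by (intro sum.cong refl) (simp add: Mplus_unit_mat power2_eq_square)
  also have "\<dots> = (\<Sum>j<q. \<Sum>l<q. \<Sum>m<q. \<Sum>n<q. \<Sum>i<q. \<Sum>a<q. \<Sum>i'<q. \<Sum>a'<q.
        U (j, a) (i, n) * cnj (U (l, a) (i, m)) * cnj (U (j, a') (i', n)) * U (l, a') (i', m))
      / (of_nat q)^2"
    unfolding cnj_sum2_mult_sum2 by (simp add: mult_ac)
  also have "(\<Sum>j<q. \<Sum>l<q. \<Sum>m<q. \<Sum>n<q. \<Sum>i<q. \<Sum>a<q. \<Sum>i'<q. \<Sum>a'<q.
      U (j, a) (i, n) * cnj (U (l, a) (i, m)) * cnj (U (j, a') (i', n)) * U (l, a') (i', m))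
      = quartic_form q U"
    unfolding quartic_form_def sum.cartesian_product
    by (rule sum.reindex_bij_witness[where j="\<lambda>(j,l,m,n,i,a,i',a'). (j,a,i,n,l,a',i',m)"
        and i="\<lambda>(i,a,b,j,i',a',b',j'). (i,i',j',j,b,a,b',a')"]) (auto simp: mult_ac)
  finally show ?thesis .
qed

lemma Mminus_eq_Mplus_swap_conj:
  "j < q \<Longrightarrow> l < q \<Longrightarrow> Mminus q U (unit_mat j l) m n = Mplus q (swap_conj U) (unit_mat j l) m n"
  by (simp add: Mminus_unit_mat Mplus_unit_mat swap_conj_def)

lemma quartic_form_swap_conj: "quartic_form q (swap_conj U) = quartic_form q U"
  unfolding quartic_form_def swap_conj_def sum.cartesian_product
  by (rule sum.reindex_bij_witness[where i="\<lambda>(i,a,b,j,i',a',b',j'). (a,i,j,b,a',i',j',b')"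
      and j="\<lambda>(i,a,b,j,i',a',b',j'). (a,i,j,b,a',i',j',b')"]) (auto simp: mult_ac)

lemma hs_norm2_Mminus_eq_Mplus: "hs_norm2 q (Mminus q U) = hs_norm2 q (Mplus q U)"
proof -
  have "hs_norm2 q (Mminus q U) = hs_norm2 q (Mplus q (swap_conj U))"
    by (rule hs_norm2_cong) (rule Mminus_eq_Mplus_swap_conj)
  then show ?thesis
    by (simp add: hs_norm2_Mplus quartic_form_swap_conj)
qed

definition frob_norm2 :: "nat \<Rightarrow> op2 \<Rightarrow> complex" where
  "frob_norm2 q U = (\<Sum>x\<in>idx2 q. \<Sum>y\<in>idx2 q. U x y * cnj (U x y))"

lemma cnj_frob_norm2: "cnj (frob_norm2 q U) = frob_norm2 q U"
  by (simp add: frob_norm2_def cnj_sum mult.commute)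

lemma frob_norm2_unitary:
  assumes "unitary2 q U"
  shows "frob_norm2 q U = (of_nat q)^2"
proof -
  have "frob_norm2 q U = (\<Sum>y\<in>idx2 q. mult2 q (adj2 U) U y y)"
    unfolding frob_norm2_def mult2_def adj2_def by (subst sum.swap) (simp add: mult.commute)
  also have "\<dots> = (\<Sum>y\<in>idx2 q. 1)"
    using assms by (intro sum.cong refl) (simp add: unitary2_def id2_def)
  finally show ?thesis
    by (simp add: idx2_def power2_eq_square)
qed

lemma sum_diag_Mplus_unit_mat:
  "(\<Sum>j<q. \<Sum>n<q. Mplus q U (unit_mat j j) n n) = frob_norm2 q U / of_nat q"
proof -
  have "(\<Sum>j<q. \<Sum>n<q. Mplus q U (unit_mat j j) n n)
     = (\<Sum>j<q. \<Sum>n<q. \<Sum>i<q. \<Sum>a<q. U (j, a) (i, n) * cnj (U (j, a) (i, n))) / of_nat q"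
    unfolding sum_divide_distrib
    by (intro sum.cong refl) (simp add: Mplus_unit_mat mult.commute sum_divide_distrib)
  also have "(\<Sum>j<q. \<Sum>n<q. \<Sum>i<q. \<Sum>a<q. U (j, a) (i, n) * cnj (U (j, a) (i, n))) = frob_norm2 q U"
    unfolding frob_norm2_def sum_idx2 unfolding sum.cartesian_product
    by (rule sum.reindex_bij_witness[where j="\<lambda>(j,n,i,a). (j,a,i,n)" and i="\<lambda>(j,a,i,n). (j,n,i,a)"])
      auto
  finally show ?thesis .
qed

lemma hs_norm2_Mplus_minus_Pmap:
  assumes "q > 0"
  shows "hs_norm2 q (\<lambda>a m n. Mplus q U a m n - Pmap q a m n)
       = hs_norm2 q (Mplus q U) + 1 - 2 * frob_norm2 q U / (of_nat q)^2"
proof -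
  define M where "M j l m n = Mplus q U (unit_mat j l) m n" for j l m n
  define c where "c j m = (M j j m m + cnj (M j j m m)) / of_nat q - 1 / (of_nat q)^2" for j m
  have expand:
    "cnj (M j l m n - Pmap q (unit_mat j l) m n) * (M j l m n - Pmap q (unit_mat j l) m n)
        = cnj (M j l m n) * M j l m n - (if j = l \<and> m = n then c j m else 0)" if "j < q" for j l m n
    using that assms by (auto simp: Pmap_unit_mat c_def field_simps power2_eq_square)
  have diag: "(\<Sum>j<q. \<Sum>m<q. M j j m m) = frob_norm2 q U / of_nat q"
    unfolding M_def by (rule sum_diag_Mplus_unit_mat)
  have "(\<Sum>j<q. \<Sum>m<q. cnj (M j j m m)) = cnj (\<Sum>j<q. \<Sum>m<q. M j j m m)"
    by (simp add: cnj_sum)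
  also have "\<dots> = frob_norm2 q U / of_nat q"
    by (simp add: diag cnj_frob_norm2)
  finally have cross: "(\<Sum>j<q. \<Sum>m<q. c j m) = 2 * frob_norm2 q U / (of_nat q)^2 - 1"
    using diag assms
    by (simp add: c_def sum_subtractf sum.distrib flip: sum_divide_distrib)
      (simp add: field_simps power2_eq_square)
  have "hs_norm2 q (\<lambda>a m n. Mplus q U a m n - Pmap q a m n)
      = (\<Sum>j<q. \<Sum>l<q. \<Sum>m<q. \<Sum>n<q.
           cnj (M j l n m) * M j l n m - (if j = l \<and> n = m then c j n else 0))"
    unfolding hs_norm2_def M_def[symmetric]
    by (intro sum.cong refl) (simp only: lessThan_iff expand)
  also have "\<dots> = hs_norm2 q (Mplus q U) - (\<Sum>j<q. \<Sum>m<q. c j m)"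
    unfolding hs_norm2_def M_def by (simp add: sum_subtractf if_zero_simps sum.delta cong: if_cong)
  finally show ?thesis
    by (simp add: cross)
qed

lemma trace2_square_unitary:
  assumes "unitary2 q X"
  shows "trace2 q (let R = mult2 q X (adj2 X) in mult2 q R R) = of_nat (q * q)"
proof -
  have R: "mult2 q X (adj2 X) a b = id2 a b" if "a \<in> idx2 q" "b \<in> idx2 q" for a b
    using assms that unfolding unitary2_def by blast
  have "mult2 q (mult2 q X (adj2 X)) (mult2 q X (adj2 X)) a a = 1" if "a \<in> idx2 q" for a
  proof -
    have "mult2 q (mult2 q X (adj2 X)) (mult2 q X (adj2 X)) a a
        = (\<Sum>c\<in>idx2 q. if c = a then 1 else 0)"
      unfolding mult2_def[of q "mult2 q X (adj2 X)"] using that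
      by (intro sum.cong refl) (auto simp: R id2_def)
    also have "\<dots> = 1"
      using that by (simp add: idx2_def)
    finally show ?thesis .
  qed
  then show ?thesis
    by (simp add: trace2_def Let_def idx2_def card_cartesian_product)
qed

lemma opent_realign_unitary:
  assumes "unitary2 q (realign X)" "q > 0"
  shows "opent q X = 1 - 1 / (real q)^2"
  using trace2_square_unitary[OF assms(1)] assms(2)
  by (simp add: opent_def field_simps power2_eq_square power4_eq_xxxx)

lemma realign_swap2: "realign swap2 = swap2"
  by (auto simp: realign_def swap2_def fun_eq_iff)

lemma unitary2_swap2: "unitary2 q swap2"
proof -
  have "mult2 q (adj2 swap2) swap2 (i, a) (j, b) = id2 (i, a) (j, b)"
    and "mult2 q swap2 (adj2 swap2) (i, a) (j, b) = id2 (i, a) (j, b)"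
    if "i < q" "a < q" for i a j b
    using that unfolding mult2_def adj2_def swap2_def sum_idx2 id2_def
    by (simp_all add: if_zero_simps sum.delta sum.delta' cong: if_cong)
  then show ?thesis
    unfolding unitary2_def idx2_def by auto
qed

lemma opent_swap2: "q > 0 \<Longrightarrow> opent q swap2 = 1 - 1 / (real q)^2"
  by (simp add: opent_realign_unitary realign_swap2 unitary2_swap2)

lemma realign_mult2_swap2:
  "b < q \<Longrightarrow> j < q \<Longrightarrow> realign (mult2 q U swap2) (b, a) (j, i) = U (i, a) (b, j)"
  unfolding realign_def mult2_def sum_idx2 swap2_def
  by (simp add: if_zero_simps sum.delta sum.delta' cong: if_cong)

lemma trace2_square_realign_mult2_swap2:
  "trace2 q (let R = mult2 q (realign (mult2 q U swap2)) (adj2 (realign (mult2 q U swap2)))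
             in mult2 q R R)
     = quartic_form q U"
proof -
  define X where "X = realign (mult2 q U swap2)"
  have X: "X (b, a) (j, i) = U (i, a) (b, j)" if "b < q" "j < q" for b a j i
    unfolding X_def using that by (rule realign_mult2_swap2)
  have "trace2 q (let R = mult2 q X (adj2 X) in mult2 q R R)
     = (\<Sum>b<q. \<Sum>a<q. \<Sum>b'<q. \<Sum>a'<q.
          (\<Sum>j<q. \<Sum>i<q. U (i, a) (b, j) * cnj (U (i, a') (b', j))) *
          (\<Sum>j'<q. \<Sum>i'<q. U (i', a') (b', j') * cnj (U (i', a) (b, j'))))"
    unfolding trace2_def mult2_def adj2_def sum_idx2 Let_def by (simp add: X)
  also have "\<dots> = (\<Sum>b<q. \<Sum>a<q. \<Sum>b'<q. \<Sum>a'<q. \<Sum>j'<q. \<Sum>i'<q. \<Sum>j<q. \<Sum>i<q.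
          U (i, a) (b, j) * cnj (U (i, a') (b', j)) *
          (U (i', a') (b', j') * cnj (U (i', a) (b, j'))))"
    by (simp only: sum_distrib_left sum_distrib_right)
  also have "\<dots> = quartic_form q U"
    unfolding quartic_form_def sum.cartesian_product
    by (rule sum.reindex_bij_witness[where j="\<lambda>(b,a,b',a',j',i',j,i). (i,a,b,j,i',a',b',j')"
        and i="\<lambda>(i,a,b,j,i',a',b',j'). (b,a,b',a',j',i',j,i)"]) (auto simp: mult.assoc)
  finally show ?thesis unfolding X_def .
qed

lemma ent_power_dual_unitary:
  assumes "dual_unitary q U" "q \<ge> 2"
  shows "((real q)^2 - 1) * (1 - ent_power q U) = Re (quartic_form q U) / (real q)^2 - 1"
proof -
  define Q where "Q = (real q)^2"
  define r where "r = Re (quartic_form q U)"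
  have "opent q U = opent q swap2"
    using assms by (simp add: dual_unitary_def opent_realign_unitary opent_swap2)
  moreover have "opent q (mult2 q U swap2) = 1 - r / Q^2"
    by (simp add: opent_def trace2_square_realign_mult2_swap2 r_def Q_def flip: power_mult)
  ultimately have ep: "ent_power q U = (1 - r / Q^2) / (1 - 1 / Q)"
    by (simp add: ent_power_def Q_def)
  have "(2::real)^2 \<le> Q"
    unfolding Q_def using assms(2) by (intro power_mono) auto
  then have "Q \<noteq> 0" "Q - 1 \<noteq> 0"
    by auto
  then have "(Q - 1) * (1 - (1 - r / Q^2) / (1 - 1 / Q)) = r / Q - 1"
    by (simp add: field_simps power2_eq_square)
  then show ?thesis
    unfolding ep by (simp add: Q_def r_def)
qed

lemma hs_norm2_Mplus_dual_unitary:
  assumes "dual_unitary q U" "q \<ge> 2"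
  shows "hs_norm2 q (Mplus q U) = of_real (1 + ((real q)^2 - 1) * (1 - ent_power q U))"
proof -
  have "hs_norm2 q (Mplus q U) = of_real (Re (quartic_form q U / (of_nat q)^2))"
    using hs_norm2_real[of q "Mplus q U"] by (simp add: hs_norm2_Mplus)
  then show ?thesis
    using assms by (simp add: ent_power_dual_unitary Re_divide_of_nat)
qed

definition adj1 :: "op1 \<Rightarrow> op1" where
  "adj1 v = (\<lambda>i j. cnj (v j i))"

definition mult_left1 :: "nat \<Rightarrow> op1 \<Rightarrow> op2 \<Rightarrow> op2" where
  "mult_left1 q u U = (\<lambda>(i, a) y. \<Sum>c<q. u i c * U (c, a) y)"

definition mult_left2 :: "nat \<Rightarrow> op1 \<Rightarrow> op2 \<Rightarrow> op2" where
  "mult_left2 q u U = (\<lambda>(i, a) y. \<Sum>c<q. u a c * U (i, c) y)"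

definition mult_right1 :: "nat \<Rightarrow> op1 \<Rightarrow> op2 \<Rightarrow> op2" where
  "mult_right1 q v U = (\<lambda>x (j, b). \<Sum>d<q. U x (d, b) * v d j)"

definition mult_right2 :: "nat \<Rightarrow> op1 \<Rightarrow> op2 \<Rightarrow> op2" where
  "mult_right2 q v U = (\<lambda>x (j, b). \<Sum>d<q. U x (j, d) * v d b)"

lemma unitary1_adj1: "unitary1 q v \<Longrightarrow> unitary1 q (adj1 v)"
  unfolding unitary1_def adj1_def by simp

lemma mult2_tensor_eq_mult_local:
  "mult2 q (tensor u1 u2) (mult2 q U (tensor v1 v2))
     = mult_left1 q u1 (mult_left2 q u2 (mult_right1 q v1 (mult_right2 q v2 U)))"
proof (intro ext)
  fix x y :: "nat \<times> nat"
  obtain i a j b where "x = (i, a)" "y = (j, b)" by fastforce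
  then show "mult2 q (tensor u1 u2) (mult2 q U (tensor v1 v2)) x y
      = mult_left1 q u1 (mult_left2 q u2 (mult_right1 q v1 (mult_right2 q v2 U))) x y"
    by (simp add: mult2_def sum_idx2 tensor_def mult_left1_def mult_left2_def mult_right1_def
        mult_right2_def sum_distrib_left sum_distrib_right mult_ac)
qed

lemma mult_left2_eq: "mult_left2 q u U = swap_conj (mult_left1 q u (swap_conj U))"
  by (auto simp: fun_eq_iff mult_left1_def mult_left2_def swap_conj_def)

lemma mult_right1_eq: "mult_right1 q v U = adj2 (mult_left1 q (adj1 v) (adj2 U))"
  by (auto simp: fun_eq_iff mult_left1_def mult_right1_def adj1_def adj2_def cnj_sum mult.commute)

lemma mult_right2_eq: "mult_right2 q v U = swap_conj (mult_right1 q v (swap_conj U))"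
  by (auto simp: fun_eq_iff mult_right1_def mult_right2_def swap_conj_def)

lemma local_unitary_invariant:
  assumes swap: "\<And>U. F (swap_conj U) = F U"
    and adj: "\<And>U. F (adj2 U) = F U"
    and left: "\<And>u U. unitary1 q u \<Longrightarrow> F (mult_left1 q u U) = F U"
    and "unitary1 q u1" "unitary1 q u2" "unitary1 q v1" "unitary1 q v2"
  shows "F (mult2 q (tensor u1 u2) (mult2 q U (tensor v1 v2))) = F U"
proof -
  have right: "F (mult_right1 q v U) = F U" if "unitary1 q v" for v U
    using left[OF unitary1_adj1[OF that]] by (simp add: mult_right1_eq adj)
  show ?thesis
    using assms
    by (simp add: mult2_tensor_eq_mult_local mult_left2_eq mult_right2_eq swap left right)
qed

lemma sum_unitary1_inner:
  assumes "unitary1 q u"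
  shows "(\<Sum>i<q. (\<Sum>c<q. u i c * f c) * cnj (\<Sum>c<q. u i c * g c)) = (\<Sum>c<q. f c * cnj (g c))"
proof -
  have "(\<Sum>i<q. (\<Sum>c<q. u i c * f c) * cnj (\<Sum>c<q. u i c * g c))
      = (\<Sum>i<q. \<Sum>c<q. \<Sum>c'<q. cnj (u i c') * u i c * (f c * cnj (g c')))"
    by (simp add: cnj_sum sum_product mult.commute mult.left_commute)
  also have "\<dots> = (\<Sum>c<q. \<Sum>c'<q. \<Sum>i<q. cnj (u i c') * u i c * (f c * cnj (g c')))"
    by (rule trans[OF sum.swap]) (rule sum.cong[OF refl], rule sum.swap)
  also have "\<dots> = (\<Sum>c<q. \<Sum>c'<q. (if c' = c then 1 else 0) * (f c * cnj (g c')))"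
    using assms unfolding unitary1_def
    by (intro sum.cong refl) (simp add: sum_distrib_right[symmetric])
  also have "\<dots> = (\<Sum>c<q. f c * cnj (g c))"
    by (simp add: if_zero_simps sum.delta cong: if_cong)
  finally show ?thesis .
qed

lemma quartic_form_adj2: "quartic_form q (adj2 U) = quartic_form q U"
  unfolding quartic_form_def adj2_def sum.cartesian_product
  by (rule sum.reindex_bij_witness[where j="\<lambda>(i,a,b,j,i',a',b',j'). (b,j',i',a,b',j,i,a')"
      and i="\<lambda>(i,a,b,j,i',a',b',j'). (b',j,i,a',b,j',i',a)"]) (auto simp: mult_ac)

lemma quartic_form_sum_first_leg:
  "quartic_form q U = (\<Sum>a<q. \<Sum>b<q. \<Sum>j<q. \<Sum>a'<q. \<Sum>b'<q. \<Sum>j'<q.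
     (\<Sum>i<q. U (i, a) (b, j) * cnj (U (i, a') (b', j))) *
     (\<Sum>i'<q. U (i', a') (b', j') * cnj (U (i', a) (b, j'))))"
  unfolding quartic_form_def sum_product sum.cartesian_product
  by (rule sum.reindex_bij_witness[where i="\<lambda>(a,b,j,a',b',j',i,i'). (i,a,b,j,i',a',b',j')"
      and j="\<lambda>(i,a,b,j,i',a',b',j'). (a,b,j,a',b',j',i,i')"]) (auto simp: mult.assoc)

lemma quartic_form_mult_left1: "unitary1 q u \<Longrightarrow> quartic_form q (mult_left1 q u U) = quartic_form q U"
  by (simp only: quartic_form_sum_first_leg mult_left1_def prod.case sum_unitary1_inner)

lemma frob_norm2_swap_conj: "frob_norm2 q (swap_conj U) = frob_norm2 q U"
  unfolding frob_norm2_def sum.cartesian_product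
  by (rule sum.reindex_bij_witness[where i="\<lambda>((i,a),(j,b)). ((a,i),(b,j))"
      and j="\<lambda>((i,a),(j,b)). ((a,i),(b,j))"]) (auto simp: idx2_def swap_conj_def)

lemma frob_norm2_adj2: "frob_norm2 q (adj2 U) = frob_norm2 q U"
  unfolding frob_norm2_def adj2_def by (subst sum.swap) (simp add: mult.commute)

lemma frob_norm2_sum_first_leg:
  "frob_norm2 q U = (\<Sum>a<q. \<Sum>y\<in>idx2 q. \<Sum>i<q. U (i, a) y * cnj (U (i, a) y))"
  unfolding frob_norm2_def idx2_def sum.cartesian_product
  by (rule sum.reindex_bij_witness[where i="\<lambda>(a,y,i). ((i,a),y)" and j="\<lambda>((i,a),y). (a,y,i)"]) auto

lemma frob_norm2_mult_left1: "unitary1 q u \<Longrightarrow> frob_norm2 q (mult_left1 q u U) = frob_norm2 q U"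
  by (simp only: frob_norm2_sum_first_leg mult_left1_def prod.case sum_unitary1_inner)

theorem mainTheorem2:
  fixes q :: nat and U :: op2
  assumes "q \<ge> 2" and "dual_unitary q U"
  shows "hs_norm2 q (Mplus q U) = of_real (1 + ((real q)^2 - 1) * (1 - ent_power q U))
       \<and> hs_norm2 q (Mminus q U) = of_real (1 + ((real q)^2 - 1) * (1 - ent_power q U))
       \<and> hs_norm2 q (\<lambda>a m n. Mplus q U a m n - Pmap q a m n)
           = of_real (((real q)^2 - 1) * (1 - ent_power q U))
       \<and> (\<forall>u1 u2 v1 v2. unitary1 q u1 \<and> unitary1 q u2 \<and> unitary1 q v1 \<and> unitary1 q v2 \<longrightarrow>
            (let U' = mult2 q (tensor u1 u2) (mult2 q U (tensor v1 v2)) in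
               hs_norm2 q (Mplus q U') = hs_norm2 q (Mplus q U)
             \<and> hs_norm2 q (Mminus q U') = hs_norm2 q (Mminus q U)
             \<and> hs_norm2 q (\<lambda>a m n. Mplus q U' a m n - Pmap q a m n)
                 = hs_norm2 q (\<lambda>a m n. Mplus q U a m n - Pmap q a m n)))"
proof -
  have q: "q > 0"
    using assms(1) by simp
  have frob: "frob_norm2 q U = (of_nat q)^2"
    using assms(2) by (simp add: dual_unitary_def frob_norm2_unitary)
  have invariant:
    "hs_norm2 q (Mplus q U') = hs_norm2 q (Mplus q U) \<and> frob_norm2 q U' = frob_norm2 q U"
    if "unitary1 q u1" "unitary1 q u2" "unitary1 q v1" "unitary1 q v2"
      and "U' = mult2 q (tensor u1 u2) (mult2 q U (tensor v1 v2))" for u1 u2 v1 v2 U'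
    using that local_unitary_invariant[where F="quartic_form q"]
      local_unitary_invariant[where F="frob_norm2 q"]
    by (simp add: hs_norm2_Mplus quartic_form_swap_conj quartic_form_adj2 quartic_form_mult_left1
        frob_norm2_swap_conj frob_norm2_adj2 frob_norm2_mult_left1)
  show ?thesis
    using hs_norm2_Mplus_dual_unitary[OF assms(2,1)] invariant frob q
    by (simp add: Let_def hs_norm2_Mminus_eq_Mplus hs_norm2_Mplus_minus_Pmap)
qed

end
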